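(* Consider the power network system described in the context and an equilibrium $(\eta^*,\omega^*,p^{M,*},p^{c,*},\psi^* )$ of it for some constant switching vector $\sigma^*\in\{0,1\}^{|\tilde{\mathcal L}|}$; write $p^{c,*}$ also for the common value of the (equal) entries of the equilibrium power command vector. Suppose $\kappa_j=q_j^{-1}$ for all $j\in\mathcal N$, and suppose there exist $\theta\ge 0$ and $\zeta\in\mathbb R$ such that $p^{c,*}-\theta/K\le\zeta\le p^{c,*}$ and, for every $(l,j)\in\tilde{\mathcal L}$, $\sigma^*_{l,j}\in\{0\}$ if $\zeta>c_{l,j}/\overline d_{l,j}$; $\sigma^*_{l,j}\in\{0,\rho_{l,j}\}$ if $\zeta=c_{l,j}/\overline d_{l,j}$; $\sigma^*_{l,j}\in\{\rho_{l,j}\}$ if $|\zeta|<c_{l,j}/\overline d_{l,j}$; $\sigma^*_{l,j}\in\{\rho_{l,j},1\}$ if $\zeta=-c_{l,j}/\overline d_{l,j}$; $\sigma^*_{l,j}\in\{1\}$ if $\zeta<-c_{l,j}/\overline d_{l,j}$. Then $(p^{M,*},\sigma^* )$ is $\epsilon$-optimal for the H-OSC problem with $\epsilon=3\theta^2/(2K)$.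
   Context: Let $(\mathcal N,\mathcal E)$ be a connected directed graph (the power network) with bus set $\mathcal N=\{1,\dots,|\mathcal N|\}$ and line set $\mathcal E$, oriented arbitrarily so that $(i,j)\in\mathcal E$ implies $(j,i)\notin\mathcal E$; $\mathcal N^p_j=\{k:(k,j)\in\mathcal E\}$, $\mathcal N^s_j=\{k:(j,k)\in\mathcal E\}$. Let $(\mathcal N,\tilde{\mathcal E})$ be a connected directed graph (communication network). For each $j\in\mathcal N$, $\mathcal L_j$ is a finite set of on-off loads and $\tilde{\mathcal L}=\{(l,j):l\in\mathcal L_j,j\in\mathcal N\}$; load $(l,j)$ has magnitude $\overline d_{l,j}>0$, switching state $\sigma_{l,j}\in\{0,1\}$, user-desired state $\rho_{l,j}\in\{0,1\}$, and a cost constant $c_{l,j}$. Constants $M_j,\gamma_j,\kappa_j,A_j,\tau_j,q_j>0$, $p^L_j\in\mathbb R$ ($j\in\mathcal N$), $B_{ij}>0$ ($(i,j)\in\mathcal E$), $\tau_{ij}>0$ ($(i,j)\in\tilde{\mathcal E}$); $K=\sum_{j\in\mathcal N}\kappa_j$. State $x=(\eta,\omega,p^M,p^c,\psi)$, dynamics: $\dot\eta_{ij}=\omega_i-\omega_j$, $(i,j)\in\mathcal E$; $M_j\dot\omega_j=p^M_j-p^L_j-A_j\omega_j-\sum_{l\in\mathcal L_j}\overline d_{l,j}\sigma_{l,j}-\sum_{k\in\mathcal N^s_j}B_{jk}\eta_{jk}+\sum_{i\in\mathcal N^p_j}B_{ij}\eta_{ij}$; $\gamma_j\dot p^M_j=-(p^M_j+\kappa_j\omega_j-\kappa_jp^c_j)$;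 $\tau_{ij}\dot\psi_{ij}=p^c_i-p^c_j$, $(i,j)\in\tilde{\mathcal E}$; $\tau_j\dot p^c_j=-p^M_j+p^L_j+\sum_{l\in\mathcal L_j}\overline d_{l,j}\sigma_{l,j}-\sum_{k:(j,k)\in\tilde{\mathcal E}}\psi_{jk}+\sum_{i:(i,j)\in\tilde{\mathcal E}}\psi_{ij}$. An equilibrium for fixed $\sigma$ is a state at which all derivatives vanish; at every equilibrium all entries of $p^{c,*}$ coincide. H-OSC problem: minimize over $p^M\in\mathbb R^{|\mathcal N|}$ and $\sigma\in\{0,1\}^{|\tilde{\mathcal L}|}$ the cost $C(p^M,\sigma)=\sum_{j\in\mathcal N}\big[\tfrac12q_j(p^M_j)^2+\sum_{l\in\mathcal L_j}C^d_{l,j}(\sigma_{l,j},\rho_{l,j})\big]$, where $C^d_{l,j}=c_{l,j}$ if $\sigma_{l,j}\ne\rho_{l,j}$ and $0$ otherwise, subject to $\sum_j p^M_j=\sum_j\big(p^L_j+\sum_{l\in\mathcal L_j}\overline d_{l,j}\sigma_{l,j}\big)$. A point $(p^M,\sigma)$ is $\epsilon$-optimal for H-OSC if $C(p^M,\sigma)\le(\text{minimum of H-OSC})+\epsilon$. *)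

theory Defs
  imports Complex_Main
begin

definition weakly_connected :: "'n set \<Rightarrow> ('n \<times> 'n) set \<Rightarrow> bool" where
  "weakly_connected N E \<longleftrightarrow> (\<forall>i\<in>N. \<forall>j\<in>N. (i, j) \<in> (E \<union> E\<inverse>)\<^sup>*)"

definition load_set :: "'n set \<Rightarrow> ('n \<Rightarrow> 'l set) \<Rightarrow> ('l \<times> 'n) set" where
  "load_set N L = {(l, j). j \<in> N \<and> l \<in> L j}"

text \<open>Equilibrium: every right-hand side of the dynamics (time derivative) vanishes.\<close>
definition is_equilibrium ::
  "'n set \<Rightarrow> ('n \<times> 'n) set \<Rightarrow> ('n \<times> 'n) set \<Rightarrow> ('n \<Rightarrow> 'l set) \<Rightarrow> ('l \<Rightarrow> 'n \<Rightarrow> real) \<Rightarrow>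
   ('n \<Rightarrow> real) \<Rightarrow> ('n \<Rightarrow> real) \<Rightarrow> ('n \<Rightarrow> real) \<Rightarrow> ('n \<Rightarrow> real) \<Rightarrow> ('n \<Rightarrow> real) \<Rightarrow> ('n \<Rightarrow> real) \<Rightarrow>
   ('n \<times> 'n \<Rightarrow> real) \<Rightarrow> ('n \<times> 'n \<Rightarrow> real) \<Rightarrow>
   ('l \<Rightarrow> 'n \<Rightarrow> real) \<Rightarrow>
   ('n \<times> 'n \<Rightarrow> real) \<Rightarrow> ('n \<Rightarrow> real) \<Rightarrow> ('n \<Rightarrow> real) \<Rightarrow> ('n \<Rightarrow> real) \<Rightarrow> ('n \<times> 'n \<Rightarrow> real) \<Rightarrow> bool" where
  "is_equilibrium N E Et L dbar M gamma kappa A tau pL B tauE sigma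
      eta omega pM pc psi \<longleftrightarrow>
     (\<forall>(i, j)\<in>E. omega i - omega j = 0) \<and>
     (\<forall>j\<in>N. (pM j - pL j - A j * omega j - (\<Sum>l\<in>L j. dbar l j * sigma l j)
              - (\<Sum>k\<in>{k. (j, k) \<in> E}. B (j, k) * eta (j, k))
              + (\<Sum>i\<in>{i. (i, j) \<in> E}. B (i, j) * eta (i, j))) / M j = 0) \<and>
     (\<forall>j\<in>N. (- (pM j + kappa j * omega j - kappa j * pc j)) / gamma j = 0) \<and>
     (\<forall>(i, j)\<in>Et. (pc i - pc j) / tauE (i, j) = 0) \<and>
     (\<forall>j\<in>N. (- pM j + pL j + (\<Sum>l\<in>L j. dbar l j * sigma l j)
              - (\<Sum>k\<in>{k. (j, k) \<in> Et}. psi (j, k))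
              + (\<Sum>i\<in>{i. (i, j) \<in> Et}. psi (i, j))) / tau j = 0)"

definition hosc_cost ::
  "'n set \<Rightarrow> ('n \<Rightarrow> 'l set) \<Rightarrow> ('n \<Rightarrow> real) \<Rightarrow> ('l \<Rightarrow> 'n \<Rightarrow> real) \<Rightarrow> ('l \<Rightarrow> 'n \<Rightarrow> real) \<Rightarrow>
   ('n \<Rightarrow> real) \<Rightarrow> ('l \<Rightarrow> 'n \<Rightarrow> real) \<Rightarrow> real" where
  "hosc_cost N L q c rho pM sigma =
     (\<Sum>j\<in>N. q j * (pM j)\<^sup>2 / 2 + (\<Sum>l\<in>L j. (if sigma l j \<noteq> rho l j then c l j else 0)))"

definition hosc_feasible ::
  "'n set \<Rightarrow> ('n \<Rightarrow> 'l set) \<Rightarrow> ('l \<Rightarrow> 'n \<Rightarrow> real) \<Rightarrow> ('n \<Rightarrow> real) \<Rightarrow>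
   ('n \<Rightarrow> real) \<Rightarrow> ('l \<Rightarrow> 'n \<Rightarrow> real) \<Rightarrow> bool" where
  "hosc_feasible N L dbar pL pM sigma \<longleftrightarrow>
     (\<forall>(l, j)\<in>load_set N L. sigma l j \<in> {0, 1}) \<and>
     (\<Sum>j\<in>N. pM j) = (\<Sum>j\<in>N. pL j + (\<Sum>l\<in>L j. dbar l j * sigma l j))"

definition hosc_min ::
  "'n set \<Rightarrow> ('n \<Rightarrow> 'l set) \<Rightarrow> ('l \<Rightarrow> 'n \<Rightarrow> real) \<Rightarrow> ('n \<Rightarrow> real) \<Rightarrow> ('n \<Rightarrow> real) \<Rightarrow>
   ('l \<Rightarrow> 'n \<Rightarrow> real) \<Rightarrow> ('l \<Rightarrow> 'n \<Rightarrow> real) \<Rightarrow> real" where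
  "hosc_min N L dbar pL q c rho =
     Inf {hosc_cost N L q c rho pM sigma | pM sigma. hosc_feasible N L dbar pL pM sigma}"

definition eps_optimal ::
  "'n set \<Rightarrow> ('n \<Rightarrow> 'l set) \<Rightarrow> ('l \<Rightarrow> 'n \<Rightarrow> real) \<Rightarrow> ('n \<Rightarrow> real) \<Rightarrow> ('n \<Rightarrow> real) \<Rightarrow>
   ('l \<Rightarrow> 'n \<Rightarrow> real) \<Rightarrow> ('l \<Rightarrow> 'n \<Rightarrow> real) \<Rightarrow> real \<Rightarrow> ('n \<Rightarrow> real) \<Rightarrow> ('l \<Rightarrow> 'n \<Rightarrow> real) \<Rightarrow> bool" where
  "eps_optimal N L dbar pL q c rho \<epsilon> pM sigma \<longleftrightarrow>
     hosc_feasible N L dbar pL pM sigma \<and>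
     hosc_cost N L q c rho pM sigma \<le> hosc_min N L dbar pL q c rho + \<epsilon>"

end

theory Submission
  imports Defs
begin

text \<open>At an equilibrium all frequencies agree along the connected power network; summing the
  power-command equations makes the line flows of the communication network cancel, so
  generation meets demand, and summing the swing equations then forces the common frequency
  to vanish. Hence \<open>p\<^sup>M\<^sub>j = \<kappa>\<^sub>j p\<^sup>c = p\<^sup>c / q\<^sub>j\<close> is feasible. For optimality we use weak duality with multiplier
  \<open>\<zeta>\<close>: completing the square bounds the generation cost of any feasible point from below, and
  the switching rule makes \<open>\<sigma>\<close> minimise the Lagrangian of every load. The duality gap is
  \<open>K (p\<^sup>c - \<zeta>)\<^sup>2 / 2 \<le> \<theta>\<^sup>2 / (2K)\<close>, so the factor 3 in the statement is slack.\<close>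

definition load_demand :: "('n \<Rightarrow> 'l set) \<Rightarrow> ('l \<Rightarrow> 'n \<Rightarrow> real) \<Rightarrow> ('l \<Rightarrow> 'n \<Rightarrow> real) \<Rightarrow> 'n \<Rightarrow> real"
  where "load_demand L dbar sigma j = (\<Sum>l\<in>L j. dbar l j * sigma l j)"

definition switching_cost :: "('n \<Rightarrow> 'l set) \<Rightarrow> ('l \<Rightarrow> 'n \<Rightarrow> real) \<Rightarrow> ('l \<Rightarrow> 'n \<Rightarrow> real) \<Rightarrow>
    ('l \<Rightarrow> 'n \<Rightarrow> real) \<Rightarrow> 'n \<Rightarrow> real"
  where "switching_cost L c rho sigma j = (\<Sum>l\<in>L j. if sigma l j \<noteq> rho l j then c l j else 0)"

lemma hosc_cost_altdef:
  "hosc_cost N L q c rho p sigma = (\<Sum>j\<in>N. q j * (p j)\<^sup>2 / 2 + switching_cost L c rho sigma j)"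
  by (simp add: hosc_cost_def switching_cost_def)

lemma hosc_feasible_altdef:
  "hosc_feasible N L dbar pL p sigma \<longleftrightarrow>
     (\<forall>(l, j)\<in>load_set N L. sigma l j \<in> {0, 1}) \<and>
     (\<Sum>j\<in>N. p j) = (\<Sum>j\<in>N. pL j + load_demand L dbar sigma j)"
  by (simp add: hosc_feasible_def load_demand_def)

lemma eps_optimalI:
  assumes "hosc_feasible N L dbar pL p sigma"
    and "\<And>p' s'. hosc_feasible N L dbar pL p' s' \<Longrightarrow>
           hosc_cost N L q c rho p sigma - \<epsilon> \<le> hosc_cost N L q c rho p' s'"
  shows "eps_optimal N L dbar pL q c rho \<epsilon> p sigma"
proof -
  have "hosc_cost N L q c rho p sigma - \<epsilon> \<le> hosc_min N L dbar pL q c rho"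
    unfolding hosc_min_def using assms by (intro cInf_greatest) blast+
  then show ?thesis using assms(1) by (simp add: eps_optimal_def)
qed

lemma eps_optimal_mono:
  assumes "eps_optimal N L dbar pL q c rho \<epsilon> p sigma" and "\<epsilon> \<le> \<epsilon>'"
  shows "eps_optimal N L dbar pL q c rho \<epsilon>' p sigma"
  using assms by (simp add: eps_optimal_def)

lemma weakly_connected_const:
  assumes "weakly_connected N E" and "\<And>i j. (i, j) \<in> E \<Longrightarrow> f i = f j"
    and "i \<in> N" and "j \<in> N"
  shows "f i = f j"
proof -
  have "(i, j) \<in> (E \<union> E\<inverse>)\<^sup>*"
    using assms(1,3,4) unfolding weakly_connected_def by blast
  then show ?thesis
    by (induction rule: rtrancl_induct) (auto dest: assms(2))
qed

lemma sum_Collect_eq_sum_if: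
  assumes "finite N" and "{k. P k} \<subseteq> N"
  shows "(\<Sum>k\<in>{k. P k}. g k) = (\<Sum>k\<in>N. if P k then g k else 0)"
proof -
  have "{k. P k} = {k\<in>N. P k}"
    using assms(2) by auto
  then show ?thesis
    using sum.inter_filter[OF assms(1)] by metis
qed

lemma sum_inflow_eq_sum_outflow:
  fixes f :: "'n \<times> 'n \<Rightarrow> 'a::comm_monoid_add"
  assumes "finite N" and "E \<subseteq> N \<times> N"
  shows "(\<Sum>j\<in>N. \<Sum>i\<in>{i. (i, j) \<in> E}. f (i, j))
       = (\<Sum>j\<in>N. \<Sum>k\<in>{k. (j, k) \<in> E}. f (j, k))"
proof -
  have "(\<Sum>j\<in>N. \<Sum>i\<in>{i. (i, j) \<in> E}. f (i, j))
      = (\<Sum>j\<in>N. \<Sum>i\<in>N. if (i, j) \<in> E then f (i, j) else 0)"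
    using assms by (intro sum.cong[OF refl] sum_Collect_eq_sum_if) auto
  also have "\<dots> = (\<Sum>i\<in>N. \<Sum>j\<in>N. if (i, j) \<in> E then f (i, j) else 0)"
    by (rule sum.swap)
  also have "\<dots> = (\<Sum>j\<in>N. \<Sum>k\<in>{k. (j, k) \<in> E}. f (j, k))"
    using assms by (intro sum.cong[OF refl] sum_Collect_eq_sum_if[symmetric]) auto
  finally show ?thesis .
qed

lemma equilibrium_generation:
  assumes "is_equilibrium N E Et L dbar M gamma kappa A tau pL B tauE sigma eta omega pM pc psi"
    and "\<And>j. j \<in> N \<Longrightarrow> gamma j > 0" and "j \<in> N"
  shows "pM j = kappa j * (pc j - omega j)"
proof -
  have "(- (pM j + kappa j * omega j - kappa j * pc j)) / gamma j = 0"
    using assms(1,3) unfolding is_equilibrium_def by blast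
  then show ?thesis
    using assms(2)[OF assms(3)] by (simp add: algebra_simps)
qed

lemma equilibrium_power_balance:
  assumes "is_equilibrium N E Et L dbar M gamma kappa A tau pL B tauE sigma eta omega pM pc psi"
    and "finite N" and "Et \<subseteq> N \<times> N" and "\<And>j. j \<in> N \<Longrightarrow> tau j > 0"
  shows "(\<Sum>j\<in>N. pM j) = (\<Sum>j\<in>N. pL j + load_demand L dbar sigma j)"
proof -
  have "pL j + load_demand L dbar sigma j - pM j
      = (\<Sum>k\<in>{k. (j, k) \<in> Et}. psi (j, k)) - (\<Sum>i\<in>{i. (i, j) \<in> Et}. psi (i, j))"
    if "j \<in> N" for j
    using assms(1) assms(4)[OF that] that by (auto simp: is_equilibrium_def load_demand_def)
  then have "(\<Sum>j\<in>N. pL j + load_demand L dbar sigma j - pM j)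
      = (\<Sum>j\<in>N. \<Sum>k\<in>{k. (j, k) \<in> Et}. psi (j, k)) - (\<Sum>j\<in>N. \<Sum>i\<in>{i. (i, j) \<in> Et}. psi (i, j))"
    by (simp add: sum_subtractf[symmetric])
  also have "\<dots> = 0"
    using sum_inflow_eq_sum_outflow[OF assms(2,3), of psi] by simp
  finally show ?thesis
    by (simp add: sum_subtractf)
qed

lemma equilibrium_frequency_zero:
  assumes "is_equilibrium N E Et L dbar M gamma kappa A tau pL B tauE sigma eta omega pM pc psi"
    and "finite N" and "E \<subseteq> N \<times> N" and "weakly_connected N E"
    and "\<And>j. j \<in> N \<Longrightarrow> M j > 0" and "\<And>j. j \<in> N \<Longrightarrow> A j > 0"
    and "(\<Sum>j\<in>N. pM j) = (\<Sum>j\<in>N. pL j + load_demand L dbar sigma j)"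
    and "j0 \<in> N"
  shows "omega j0 = 0"
proof -
  have uniform: "omega j = omega j0" if "j \<in> N" for j
    using weakly_connected_const[OF assms(4) _ that assms(8)] assms(1)
    by (auto simp: is_equilibrium_def)
  have swing: "pM j - (pL j + load_demand L dbar sigma j)
      + ((\<Sum>i\<in>{i. (i, j) \<in> E}. B (i, j) * eta (i, j)) - (\<Sum>k\<in>{k. (j, k) \<in> E}. B (j, k) * eta (j, k)))
      = A j * omega j0" if "j \<in> N" for j
    using assms(1) assms(5)[OF that] uniform[OF that] that
    by (auto simp: is_equilibrium_def load_demand_def)
  have "(\<Sum>j\<in>N. A j) * omega j0 = (\<Sum>j\<in>N. pM j - (pL j + load_demand L dbar sigma j)
      + ((\<Sum>i\<in>{i. (i, j) \<in> E}. B (i, j) * eta (i, j)) - (\<Sum>k\<in>{k. (j, k) \<in> E}. B (j, k) * eta (j, k))))"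
    using swing by (simp add: sum_distrib_right)
  also have "\<dots> = 0"
    using assms(7) sum_inflow_eq_sum_outflow[OF assms(2,3), of "\<lambda>e. B e * eta e"]
    by (simp add: sum.distrib sum_subtractf)
  finally have "(\<Sum>j\<in>N. A j) * omega j0 = 0" .
  moreover have "(\<Sum>j\<in>N. A j) > 0"
    using assms(2,6,8) by (intro sum_pos) auto
  ultimately show ?thesis
    by simp
qed

lemma equilibrium_proportional_dispatch:
  assumes "is_equilibrium N E Et L dbar M gamma kappa A tau pL B tauE sigma eta omega pM pc psi"
    and "finite N" and "E \<subseteq> N \<times> N" and "weakly_connected N E" and "Et \<subseteq> N \<times> N"
    and "\<And>j. j \<in> N \<Longrightarrow> M j > 0 \<and> gamma j > 0 \<and> A j > 0 \<and> tau j > 0"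
    and "j \<in> N"
  shows "pM j = kappa j * pc j"
proof -
  have "(\<Sum>j\<in>N. pM j) = (\<Sum>j\<in>N. pL j + load_demand L dbar sigma j)"
    using assms(6) by (intro equilibrium_power_balance[OF assms(1,2,5)]) blast
  then have "omega j = 0"
    using assms(6) by (intro equilibrium_frequency_zero[OF assms(1-4) _ _ _ assms(7)]) blast+
  then show ?thesis
    using equilibrium_generation[OF assms(1) _ assms(7)] assms(6) by auto
qed

lemma switching_rule_minimal:
  fixes z d c r s0 s :: real
  assumes "d > 0" and "s0 \<in> {0, 1}" and "r \<in> {0, 1}" and "s \<in> {0, 1}"
    and "(z > c / d \<longrightarrow> s0 \<in> {0}) \<and>
         (z = c / d \<longrightarrow> s0 \<in> {0, r}) \<and>
         (\<bar>z\<bar> < c / d \<longrightarrow> s0 \<in> {r}) \<and>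
         (z = - (c / d) \<longrightarrow> s0 \<in> {r, 1}) \<and>
         (z < - (c / d) \<longrightarrow> s0 \<in> {1})"
  shows "z * d * s0 + (if s0 \<noteq> r then c else 0) \<le> z * d * s + (if s \<noteq> r then c else 0)"
proof -
  have scale: "z * d * x + (if b then c else 0) = (z * x + (if b then c / d else 0)) * d" for x b
    using assms(1) by (simp add: algebra_simps)
  have "z * s0 + (if s0 \<noteq> r then c / d else 0) \<le> z * s + (if s \<noteq> r then c / d else 0)"
    using assms(2-5) by (auto simp: abs_if split: if_split_asm)
  then show ?thesis
    unfolding scale by (rule mult_right_mono) (use assms(1) in simp)
qed

lemma bus_lagrangian_minimal:
  assumes "\<And>l. l \<in> L j \<Longrightarrow>
      z * dbar l j * sigma l j + (if sigma l j \<noteq> rho l j then c l j else 0)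
      \<le> z * dbar l j * s l j + (if s l j \<noteq> rho l j then c l j else 0)"
  shows "z * load_demand L dbar sigma j + switching_cost L c rho sigma j
      \<le> z * load_demand L dbar s j + switching_cost L c rho s j"
proof -
  have "z * load_demand L dbar sigma j + switching_cost L c rho sigma j
      = (\<Sum>l\<in>L j. z * dbar l j * sigma l j + (if sigma l j \<noteq> rho l j then c l j else 0))"
    by (simp add: load_demand_def switching_cost_def sum.distrib sum_distrib_left mult.assoc)
  also have "\<dots> \<le> (\<Sum>l\<in>L j. z * dbar l j * s l j + (if s l j \<noteq> rho l j then c l j else 0))"
    using assms by (rule sum_mono)
  also have "\<dots> = z * load_demand L dbar s j + switching_cost L c rho s j"
    by (simp add: load_demand_def switching_cost_def sum.distrib sum_distrib_left mult.assoc)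
  finally show ?thesis .
qed

lemma generation_cost_lower_bound:
  fixes q p z :: real
  assumes "q > 0"
  shows "z * p - z\<^sup>2 / (2 * q) \<le> q * p\<^sup>2 / 2"
proof -
  have "q * p\<^sup>2 / 2 - (z * p - z\<^sup>2 / (2 * q)) = (q * p - z)\<^sup>2 / (2 * q)"
    using assms by (simp add: power2_eq_square field_simps)
  also have "\<dots> \<ge> 0"
    using assms by simp
  finally show ?thesis
    by simp
qed

text \<open>Weak duality: the left-hand side is the Lagrangian dual function of H-OSC at the multiplier
  \<open>z\<close> of the power balance constraint, whose minimisation over the switching states is attained
  at \<open>sigma\<close>.\<close>
lemma hosc_cost_dual_bound:
  assumes "finite N" and "\<And>j. j \<in> N \<Longrightarrow> q j > 0"
    and "hosc_feasible N L dbar pL p s"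
    and "\<And>l j s'. (l, j) \<in> load_set N L \<Longrightarrow> s' \<in> {0, 1} \<Longrightarrow>
           z * dbar l j * sigma l j + (if sigma l j \<noteq> rho l j then c l j else 0)
           \<le> z * dbar l j * s' + (if s' \<noteq> rho l j then c l j else 0)"
  shows "z * (\<Sum>j\<in>N. pL j + load_demand L dbar sigma j) - z\<^sup>2 * (\<Sum>j\<in>N. 1 / q j) / 2
           + (\<Sum>j\<in>N. switching_cost L c rho sigma j)
         \<le> hosc_cost N L q c rho p s"
proof -
  have binary: "s l j \<in> {0, 1}" if "(l, j) \<in> load_set N L" for l j
    using assms(3) that by (auto simp: hosc_feasible_altdef)
  have balance: "sum p N = (\<Sum>j\<in>N. pL j + load_demand L dbar s j)"
    using assms(3) by (simp add: hosc_feasible_altdef)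
  have loads: "z * load_demand L dbar sigma j + switching_cost L c rho sigma j
      \<le> z * load_demand L dbar s j + switching_cost L c rho s j" if "j \<in> N" for j
    using that by (intro bus_lagrangian_minimal assms(4) binary) (auto simp: load_set_def)
  have "z * (\<Sum>j\<in>N. pL j + load_demand L dbar sigma j) - z\<^sup>2 * (\<Sum>j\<in>N. 1 / q j) / 2
           + (\<Sum>j\<in>N. switching_cost L c rho sigma j)
      = z * sum pL N - z\<^sup>2 * (\<Sum>j\<in>N. 1 / q j) / 2
           + (\<Sum>j\<in>N. z * load_demand L dbar sigma j + switching_cost L c rho sigma j)"
    by (simp add: sum.distrib sum_distrib_left algebra_simps)
  also have "\<dots> \<le> z * sum pL N - z\<^sup>2 * (\<Sum>j\<in>N. 1 / q j) / 2
           + (\<Sum>j\<in>N. z * load_demand L dbar s j + switching_cost L c rho s j)"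
    using loads by (simp add: sum_mono)
  also have "\<dots> = z * sum p N - z\<^sup>2 * (\<Sum>j\<in>N. 1 / q j) / 2 + (\<Sum>j\<in>N. switching_cost L c rho s j)"
    unfolding balance by (simp add: sum.distrib sum_distrib_left algebra_simps)
  also have "\<dots> = (\<Sum>j\<in>N. z * p j - z\<^sup>2 / (2 * q j)) + (\<Sum>j\<in>N. switching_cost L c rho s j)"
    by (simp add: sum_subtractf sum_distrib_left sum_divide_distrib mult.commute)
  also have "\<dots> \<le> (\<Sum>j\<in>N. q j * (p j)\<^sup>2 / 2) + (\<Sum>j\<in>N. switching_cost L c rho s j)"
    by (auto intro!: add_right_mono sum_mono generation_cost_lower_bound assms(2))
  also have "\<dots> = hosc_cost N L q c rho p s"
    by (simp add: hosc_cost_altdef sum.distrib)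
  finally show ?thesis .
qed

lemma duality_gap_bound:
  fixes K theta x z :: real
  assumes "K > 0" and "x - theta / K \<le> z" and "z \<le> x"
  shows "x\<^sup>2 * K / 2 - theta\<^sup>2 / (2 * K) \<le> z * x * K - z\<^sup>2 * K / 2"
proof -
  have "(x - z)\<^sup>2 \<le> (theta / K)\<^sup>2"
    using assms(2,3) by (intro power_mono) auto
  then have "K * (x - z)\<^sup>2 / 2 \<le> K * (theta / K)\<^sup>2 / 2"
    using assms(1) by simp
  also have "\<dots> = theta\<^sup>2 / (2 * K)"
    using assms(1) by (simp add: power2_eq_square)
  finally show ?thesis
    by (simp add: power2_eq_square algebra_simps)
qed

lemma hosc_cost_proportional_dispatch:
  assumes "\<And>j. j \<in> N \<Longrightarrow> q j > 0" and "\<And>j. j \<in> N \<Longrightarrow> p j = x / q j"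
  shows "hosc_cost N L q c rho p sigma
           = x\<^sup>2 * (\<Sum>j\<in>N. 1 / q j) / 2 + (\<Sum>j\<in>N. switching_cost L c rho sigma j)"
proof -
  have "q j * (p j)\<^sup>2 / 2 = x\<^sup>2 * (1 / q j) / 2" if "j \<in> N" for j
    using assms(1)[OF that] assms(2)[OF that] by (simp add: power2_eq_square)
  then show ?thesis
    by (simp add: hosc_cost_altdef sum.distrib sum_distrib_left sum_divide_distrib)
qed

lemma hosc_eps_optimal_certificate:
  assumes "finite N" and "N \<noteq> {}" and "\<And>j. j \<in> N \<Longrightarrow> q j > 0"
    and "\<And>j. j \<in> N \<Longrightarrow> p j = x / q j"
    and "hosc_feasible N L dbar pL p sigma"
    and "\<And>l j s'. (l, j) \<in> load_set N L \<Longrightarrow> s' \<in> {0, 1} \<Longrightarrow>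
           z * dbar l j * sigma l j + (if sigma l j \<noteq> rho l j then c l j else 0)
           \<le> z * dbar l j * s' + (if s' \<noteq> rho l j then c l j else 0)"
    and "x - theta / (\<Sum>j\<in>N. 1 / q j) \<le> z" and "z \<le> x"
  shows "eps_optimal N L dbar pL q c rho (theta\<^sup>2 / (2 * (\<Sum>j\<in>N. 1 / q j))) p sigma"
proof -
  define K where "K = (\<Sum>j\<in>N. 1 / q j)"
  have K_pos: "K > 0"
    unfolding K_def using assms(1-3) by (intro sum_pos) auto
  have "(\<Sum>j\<in>N. pL j + load_demand L dbar sigma j) = (\<Sum>j\<in>N. x / q j)"
    using assms(4,5) by (simp add: hosc_feasible_altdef)
  then have demand: "(\<Sum>j\<in>N. pL j + load_demand L dbar sigma j) = x * K"
    unfolding K_def by (simp add: sum_distrib_left)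
  have cost: "hosc_cost N L q c rho p sigma = x\<^sup>2 * K / 2 + (\<Sum>j\<in>N. switching_cost L c rho sigma j)"
    unfolding K_def using assms(3,4) by (rule hosc_cost_proportional_dispatch)
  have gap: "x\<^sup>2 * K / 2 - theta\<^sup>2 / (2 * K) \<le> z * x * K - z\<^sup>2 * K / 2"
    using K_pos assms(7,8) unfolding K_def[symmetric] by (rule duality_gap_bound)
  show ?thesis
  proof (rule eps_optimalI[OF assms(5)])
    fix p' s'
    assume "hosc_feasible N L dbar pL p' s'"
    with assms(1,3) have "z * (\<Sum>j\<in>N. pL j + load_demand L dbar sigma j)
        - z\<^sup>2 * (\<Sum>j\<in>N. 1 / q j) / 2 + (\<Sum>j\<in>N. switching_cost L c rho sigma j)
        \<le> hosc_cost N L q c rho p' s'"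
      using assms(6) by (rule hosc_cost_dual_bound)
    with cost gap show "hosc_cost N L q c rho p sigma - theta\<^sup>2 / (2 * (\<Sum>j\<in>N. 1 / q j))
        \<le> hosc_cost N L q c rho p' s'"
      unfolding demand K_def[symmetric] by simp
  qed
qed

theorem proposition1:
  fixes N :: "'n set" and E Et :: "('n \<times> 'n) set" and L :: "'n \<Rightarrow> 'l set"
    and dbar c rho sigma :: "'l \<Rightarrow> 'n \<Rightarrow> real"
    and M gamma kappa A tau q pL :: "'n \<Rightarrow> real"
    and B tauE :: "'n \<times> 'n \<Rightarrow> real"
    and eta psi :: "'n \<times> 'n \<Rightarrow> real" and omega pM pc :: "'n \<Rightarrow> real"
    and pcs theta zeta :: real
  assumes "finite N" and "N \<noteq> {}"
    and "E \<subseteq> N \<times> N" and "\<And>i j. (i, j) \<in> E \<Longrightarrow> (j, i) \<notin> E"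
    and "weakly_connected N E"
    and "Et \<subseteq> N \<times> N" and "weakly_connected N Et"
    and "\<And>j. j \<in> N \<Longrightarrow> finite (L j)"
    and "\<And>l j. (l, j) \<in> load_set N L \<Longrightarrow> dbar l j > 0"
    and "\<And>l j. (l, j) \<in> load_set N L \<Longrightarrow> rho l j \<in> {0, 1}"
    and "\<And>l j. (l, j) \<in> load_set N L \<Longrightarrow> sigma l j \<in> {0, 1}"
    and "\<And>j. j \<in> N \<Longrightarrow> M j > 0 \<and> gamma j > 0 \<and> kappa j > 0 \<and> A j > 0 \<and> tau j > 0 \<and> q j > 0"
    and "\<And>e. e \<in> E \<Longrightarrow> B e > 0"
    and "\<And>e. e \<in> Et \<Longrightarrow> tauE e > 0"
    and "is_equilibrium N E Et L dbar M gamma kappa A tau pL B tauE sigma eta omega pM pc psi"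
    and "\<And>j. j \<in> N \<Longrightarrow> pc j = pcs"
    and "\<And>j. j \<in> N \<Longrightarrow> kappa j = 1 / q j"
    and "theta \<ge> 0"
    and "pcs - theta / (\<Sum>j\<in>N. kappa j) \<le> zeta" and "zeta \<le> pcs"
    and "\<And>l j. (l, j) \<in> load_set N L \<Longrightarrow>
           (zeta > c l j / dbar l j \<longrightarrow> sigma l j \<in> {0}) \<and>
           (zeta = c l j / dbar l j \<longrightarrow> sigma l j \<in> {0, rho l j}) \<and>
           (\<bar>zeta\<bar> < c l j / dbar l j \<longrightarrow> sigma l j \<in> {rho l j}) \<and>
           (zeta = - (c l j / dbar l j) \<longrightarrow> sigma l j \<in> {rho l j, 1}) \<and>
           (zeta < - (c l j / dbar l j) \<longrightarrow> sigma l j \<in> {1})"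
  shows "eps_optimal N L dbar pL q c rho (3 * theta\<^sup>2 / (2 * (\<Sum>j\<in>N. kappa j))) pM sigma"
proof -
  have q_pos: "\<And>j. j \<in> N \<Longrightarrow> q j > 0"
    using assms(12) by blast
  have K_altdef: "(\<Sum>j\<in>N. kappa j) = (\<Sum>j\<in>N. 1 / q j)"
    using assms(17) by simp
  have dispatch: "pM j = pcs / q j" if "j \<in> N" for j
  proof -
    have "pM j = kappa j * pc j"
      using assms(12) by (intro equilibrium_proportional_dispatch[OF assms(15,1,3,5,6) _ that]) blast
    then show ?thesis
      using assms(16,17) that by simp
  qed
  have "(\<Sum>j\<in>N. pM j) = (\<Sum>j\<in>N. pL j + load_demand L dbar sigma j)"
    using assms(12) by (intro equilibrium_power_balance[OF assms(15,1,6)]) blast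
  then have feasible: "hosc_feasible N L dbar pL pM sigma"
    using assms(11) by (auto simp: hosc_feasible_altdef)
  have loads_minimal: "zeta * dbar l j * sigma l j + (if sigma l j \<noteq> rho l j then c l j else 0)
      \<le> zeta * dbar l j * s' + (if s' \<noteq> rho l j then c l j else 0)"
    if "(l, j) \<in> load_set N L" and "s' \<in> {0, 1}" for l j s'
    using assms(9,11,10)[OF that(1)] that(2) assms(21)[OF that(1)] by (rule switching_rule_minimal)
  have "eps_optimal N L dbar pL q c rho (theta\<^sup>2 / (2 * (\<Sum>j\<in>N. kappa j))) pM sigma"
    using assms(1,2) q_pos dispatch feasible loads_minimal assms(19,20)
    unfolding K_altdef by (rule hosc_eps_optimal_certificate)
  moreover have "theta\<^sup>2 / (2 * (\<Sum>j\<in>N. kappa j)) \<le> 3 * theta\<^sup>2 / (2 * (\<Sum>j\<in>N. kappa j))"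
    using assms(1,2,12) by (simp add: divide_right_mono sum_nonneg less_imp_le)
  ultimately show ?thesis
    by (rule eps_optimal_mono)
qed

end
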